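(* Let $K$ be a compact Hausdorff space. If $C(K)$ has the ball fixed point property, then $K$ is an $F$-space.
   Context: $C(K)$ is the real Banach space of continuous functions $K\to\mathbb{R}$ with the sup norm. A real Banach space $X$ has the ball fixed point property (BFPP) if every nonexpansive map $T\colon B_X\to B_X$ (i.e. $\|Tx-Ty\|\le\|x-y\|$) has a fixed point, where $B_X$ is the closed unit ball. A compact space $K$ is an $F$-space if for every $g\in C(K)$ there exists a continuous $f\colon K\to[-1,1]$ with $g\cdot f=|g|$ (equivalently, disjoint cozero sets of $K$ have disjoint closures). *)

theory Defs
  imports "HOL-Analysis.Analysis"
begin

text \<open>C(K) is rendered as the library Banach space ('a, real) bcontfun of bounded
continuous real functions with the sup norm; for compact K every continuous
function is bounded, so this is exactly C(K).\<close>

definition nonexpansive_on :: "'b::metric_space set \<Rightarrow> ('b \<Rightarrow> 'b) \<Rightarrow> bool" where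
  "nonexpansive_on S T \<longleftrightarrow> (\<forall>x\<in>S. \<forall>y\<in>S. dist (T x) (T y) \<le> dist x y)"

definition ball_fixed_point_property :: "'b::real_normed_vector itself \<Rightarrow> bool" where
  "ball_fixed_point_property _ \<longleftrightarrow>
     (\<forall>T::'b \<Rightarrow> 'b. T ` cball 0 1 \<subseteq> cball 0 1 \<and> nonexpansive_on (cball 0 1) T
        \<longrightarrow> (\<exists>x\<in>cball 0 1. T x = x))"

definition F_space :: "'a::topological_space itself \<Rightarrow> bool" where
  "F_space _ \<longleftrightarrow>
     (\<forall>g::'a \<Rightarrow> real. continuous_on UNIV g \<longrightarrow>
        (\<exists>f::'a \<Rightarrow> real. continuous_on UNIV f \<and> (\<forall>x. f x \<in> {-1..1}) \<and>
           (\<forall>x. g x * f x = \<bar>g x\<bar>)))"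

end

theory Submission
  imports Defs
begin

text \<open>Given g, the map T x = max (-1) (min 1 (x + g)) is a nonexpansive self-map of the unit
ball of C(K), since truncation to [-1,1] is 1-Lipschitz. At a fixed point f we have
-1 \<le> f \<le> 1, and wherever g > 0 (resp. g < 0) the equation f = T f forces f = 1
(resp. f = -1); hence g * f = |g|.\<close>

definition truncated_shift :: "('a::topological_space \<Rightarrow> real) \<Rightarrow> ('a, real) bcontfun \<Rightarrow> ('a, real) bcontfun"
  where "truncated_shift g x = Bcontfun (\<lambda>t. max (-1) (min 1 (x t + g t)))"

lemma truncated_shift_apply:
  assumes "continuous_on UNIV g"
  shows "truncated_shift g x t = max (-1) (min 1 (x t + g t))"
proof -
  have "(\<lambda>t. max (-1) (min 1 (x t + g t))) \<in> bcontfun"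
    by (rule bcontfun_normI[where b=1]) (auto intro!: continuous_intros assms)
  then show ?thesis
    unfolding truncated_shift_def by (simp add: Bcontfun_inverse)
qed

lemma norm_truncated_shift_le_1:
  assumes "continuous_on UNIV g"
  shows "norm (truncated_shift g x) \<le> 1"
  by (rule norm_bound) (simp add: truncated_shift_apply[OF assms])

lemma dist_truncated_shift_le:
  assumes "continuous_on UNIV g"
  shows "dist (truncated_shift g x) (truncated_shift g y) \<le> dist x y"
proof (rule dist_bound)
  fix t
  have "dist (x t) (y t) \<le> dist x y"
    by (rule dist_bounded)
  then show "dist (truncated_shift g x t) (truncated_shift g y t) \<le> dist x y"
    by (simp add: truncated_shift_apply[OF assms] dist_real_def)
qed

lemma truncated_shift_fixed_point_sign:
  fixes a b :: real
  assumes "\<bar>a\<bar> \<le> 1" and "max (-1) (min 1 (a + b)) = a"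
  shows "b * a = \<bar>b\<bar>"
proof -
  have "b > 0 \<Longrightarrow> a = 1" and "b < 0 \<Longrightarrow> a = -1"
    using assms by argo+
  then show ?thesis
    by (cases b "0::real" rule: linorder_cases) auto
qed

theorem mainTheorem2:
  assumes "compact (UNIV :: 'a::t2_space set)"
    and "ball_fixed_point_property TYPE(('a, real) bcontfun)"
  shows "F_space TYPE('a)"
  unfolding F_space_def
proof (intro allI impI)
  fix g :: "'a \<Rightarrow> real"
  assume g: "continuous_on UNIV g"
  have "truncated_shift g ` cball 0 1 \<subseteq> cball 0 1"
    using norm_truncated_shift_le_1[OF g] by auto
  moreover have "nonexpansive_on (cball 0 1) (truncated_shift g)"
    unfolding nonexpansive_on_def using dist_truncated_shift_le[OF g] by blast
  ultimately obtain f where f_ball: "f \<in> cball 0 1" and f_fixed: "truncated_shift g f = f"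
    using assms(2) unfolding ball_fixed_point_property_def by blast
  have f_bound: "\<bar>f t\<bar> \<le> 1" for t
    using norm_bounded[of f t] f_ball by simp
  have "g t * f t = \<bar>g t\<bar>" for t
    using truncated_shift_fixed_point_sign[OF f_bound]
      truncated_shift_apply[OF g, of f t] f_fixed by simp
  then show "\<exists>f. continuous_on UNIV f \<and> (\<forall>x. f x \<in> {-1..1}) \<and> (\<forall>x. g x * f x = \<bar>g x\<bar>)"
    using f_bound abs_le_iff by (intro exI[of _ "apply_bcontfun f"]) auto
qed

end
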